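(* Let $(\mathcal{G},\alpha)$ be an abstract GKM graph with vertex set $\mathcal{V}$. Call a subset $F\subseteq H_T^*(\mathcal{G})\setminus\{0\}$ with $fg=0$ for all distinct $f,g\in F$ and $|F|=|\mathcal{V}|$ a maximal collection. Then: (a) $\{\tau_p: p\in\mathcal{V}\}$ is a maximal collection; (b) every maximal collection is of the form $\{c_p\tau_p: p\in\mathcal{V}\}$ with $c_p\in H^*(BT)$; (c) these properties characterize $\{\tau_p\}_{p\in\mathcal{V}}$ up to signs: if $\{g_p\}_{p\in\mathcal{V}}$ is a maximal collection such that every maximal collection is obtained from it by multiplying each $g_p$ by an element of $H^*(BT)$, then $g_p=\pm\tau_p$ for every $p$ (after suitable indexing).
   Context: $H^*(BT)=\mathbb{Z}[x_1,\dots,x_r]$ with $\deg x_i=2$. Let $\mathcal{G}$ be a finite $n$-valent undirected graph (multiple edges allowed, no loops) with vertex set $\mathcal{V}$ and set of directed edges $\mathcal{E}$; for $e\in\mathcal{E}$, $\overline e$ is the reversed edge, $i(e),t(e)$ its initial and terminal vertices, and $\mathcal{E}_p=\{e: i(e)=p\}$. An axial function $\alpha:\mathcal{E}\to H^2(BT)$ satisfies: $\alpha(\overline e)=\pm\alpha(e)$; $\alpha(e),\alpha(e')$ linearly independent over $\mathbb{Z}$ if $e\ne e'$, $i(e)=i(e')$; coefficients of each $\alpha(e)$ have gcd $1$. An abstract GKM graph is such $(\mathcal{G},\alpha)$ admitting a parallel transport, i.e. bijections $\mathcal{P}_e:\mathcal{E}_{i(e)}\to\mathcal{E}_{t(e)}$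 with $\mathcal{P}_{\overline e}=\mathcal{P}_e^{-1}$, $\mathcal{P}_e(e)=\overline e$, $\alpha(\mathcal{P}_e(e'))-\alpha(e')\in\mathbb{Z}\alpha(e)$. Its graph equivariant cohomology is $H_T^*(\mathcal{G})=\{f:\mathcal{V}\to H^*(BT)\ :\ \alpha(e)\mid f(i(e))-f(t(e))\ \forall e\in\mathcal{E}\}$ with pointwise operations. The equivariant Thom class of $p\in\mathcal{V}$ is $\tau_p:\mathcal{V}\to H^*(BT)$, $\tau_p(p)=\prod_{e\in\mathcal{E}_p}\alpha(e)$, $\tau_p(q)=0$ for $q\ne p$; it lies in $H_T^{2n}(\mathcal{G})$. *)

theory Defs
  imports Main "HOL-Library.Poly_Mapping"
begin

text \<open>H^*(BT) = Z[x_0,...,x_{r-1}], realised inside the polynomial ring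
  (nat =>0 nat) =>0 int (monomials = finitely supported exponent vectors).\<close>

type_synonym ipoly = "(nat \<Rightarrow>\<^sub>0 nat) \<Rightarrow>\<^sub>0 int"

definition HBT :: "nat \<Rightarrow> ipoly set" where
  "HBT r = {a. \<forall>m\<in>Poly_Mapping.keys a. Poly_Mapping.keys m \<subseteq> {..<r}}"

definition HBT2 :: "nat \<Rightarrow> ipoly set" where
  "HBT2 r = {a \<in> HBT r. \<forall>m\<in>Poly_Mapping.keys a. (\<Sum>j\<in>Poly_Mapping.keys m. Poly_Mapping.lookup m j) = 1}"

definition Z_lin_indep :: "ipoly \<Rightarrow> ipoly \<Rightarrow> bool" where
  "Z_lin_indep a b \<longleftrightarrow> (\<forall>c d :: int. of_int c * a + of_int d * b = 0 \<longrightarrow> c = 0 \<and> d = 0)"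

definition coeff_gcd_one :: "ipoly \<Rightarrow> bool" where
  "coeff_gcd_one a \<longleftrightarrow> Gcd (Poly_Mapping.lookup a ` Poly_Mapping.keys a) = 1"

definition out_edges :: "'e set \<Rightarrow> ('e \<Rightarrow> 'v) \<Rightarrow> 'v \<Rightarrow> 'e set" where
  "out_edges E i p = {e \<in> E. i e = p}"

text \<open>Finite n-valent graph (multiple edges allowed, no loops), given by the set V of
  vertices, the set E of directed edges, initial/terminal maps i,t and reversal rv.\<close>
definition nvalent_graph ::
  "nat \<Rightarrow> 'v set \<Rightarrow> 'e set \<Rightarrow> ('e \<Rightarrow> 'v) \<Rightarrow> ('e \<Rightarrow> 'v) \<Rightarrow> ('e \<Rightarrow> 'e) \<Rightarrow> bool" where
  "nvalent_graph n V E i t rv \<longleftrightarrow>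
     finite V \<and> finite E \<and>
     (\<forall>e\<in>E. i e \<in> V \<and> t e \<in> V \<and> i e \<noteq> t e \<and>
             rv e \<in> E \<and> rv e \<noteq> e \<and> rv (rv e) = e \<and> i (rv e) = t e \<and> t (rv e) = i e) \<and>
     (\<forall>p\<in>V. card (out_edges E i p) = n)"

definition axial_function ::
  "nat \<Rightarrow> 'v set \<Rightarrow> 'e set \<Rightarrow> ('e \<Rightarrow> 'v) \<Rightarrow> ('e \<Rightarrow> 'e) \<Rightarrow> ('e \<Rightarrow> ipoly) \<Rightarrow> bool" where
  "axial_function r V E i rv \<alpha> \<longleftrightarrow>
     (\<forall>e\<in>E. \<alpha> e \<in> HBT2 r \<and> coeff_gcd_one (\<alpha> e) \<and> (\<alpha> (rv e) = \<alpha> e \<or> \<alpha> (rv e) = - \<alpha> e)) \<and>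
     (\<forall>e\<in>E. \<forall>e'\<in>E. e \<noteq> e' \<and> i e = i e' \<longrightarrow> Z_lin_indep (\<alpha> e) (\<alpha> e'))"

definition parallel_transport ::
  "'e set \<Rightarrow> ('e \<Rightarrow> 'v) \<Rightarrow> ('e \<Rightarrow> 'v) \<Rightarrow> ('e \<Rightarrow> 'e) \<Rightarrow> ('e \<Rightarrow> ipoly) \<Rightarrow> ('e \<Rightarrow> 'e \<Rightarrow> 'e) \<Rightarrow> bool" where
  "parallel_transport E i t rv \<alpha> P \<longleftrightarrow>
     (\<forall>e\<in>E. bij_betw (P e) (out_edges E i (i e)) (out_edges E i (t e)) \<and>
            (\<forall>e'\<in>out_edges E i (i e). P (rv e) (P e e') = e') \<and>
            P e e = rv e \<and>
            (\<forall>e'\<in>out_edges E i (i e). \<exists>k::int. \<alpha> (P e e') - \<alpha> e' = of_int k * \<alpha> e))"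

definition abstract_GKM_graph ::
  "nat \<Rightarrow> nat \<Rightarrow> 'v set \<Rightarrow> 'e set \<Rightarrow> ('e \<Rightarrow> 'v) \<Rightarrow> ('e \<Rightarrow> 'v) \<Rightarrow> ('e \<Rightarrow> 'e) \<Rightarrow> ('e \<Rightarrow> ipoly) \<Rightarrow> bool" where
  "abstract_GKM_graph r n V E i t rv \<alpha> \<longleftrightarrow>
     nvalent_graph n V E i t rv \<and> axial_function r V E i rv \<alpha> \<and>
     (\<exists>P. parallel_transport E i t rv \<alpha> P)"

text \<open>Graph equivariant cohomology: functions V -> H^*(BT) (extended by 0 outside V).\<close>
definition graph_cohomology ::
  "nat \<Rightarrow> 'v set \<Rightarrow> 'e set \<Rightarrow> ('e \<Rightarrow> 'v) \<Rightarrow> ('e \<Rightarrow> 'v) \<Rightarrow> ('e \<Rightarrow> ipoly) \<Rightarrow> ('v \<Rightarrow> ipoly) set" where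
  "graph_cohomology r V E i t \<alpha> =
     {f. (\<forall>q\<in>V. f q \<in> HBT r) \<and> (\<forall>q. q \<notin> V \<longrightarrow> f q = 0) \<and>
         (\<forall>e\<in>E. \<alpha> e dvd f (i e) - f (t e))}"

definition thom_class :: "'e set \<Rightarrow> ('e \<Rightarrow> 'v) \<Rightarrow> ('e \<Rightarrow> ipoly) \<Rightarrow> 'v \<Rightarrow> 'v \<Rightarrow> ipoly" where
  "thom_class E i \<alpha> p = (\<lambda>q. if q = p then (\<Prod>e\<in>out_edges E i p. \<alpha> e) else 0)"

definition maximal_collection ::
  "nat \<Rightarrow> 'v set \<Rightarrow> 'e set \<Rightarrow> ('e \<Rightarrow> 'v) \<Rightarrow> ('e \<Rightarrow> 'v) \<Rightarrow> ('e \<Rightarrow> ipoly) \<Rightarrow> ('v \<Rightarrow> ipoly) set \<Rightarrow> bool" where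
  "maximal_collection r V E i t \<alpha> F \<longleftrightarrow>
     F \<subseteq> graph_cohomology r V E i t \<alpha> - {(\<lambda>q. 0)} \<and>
     (\<forall>f\<in>F. \<forall>g\<in>F. f \<noteq> g \<longrightarrow> (\<lambda>q. f q * g q) = (\<lambda>q. 0)) \<and>
     finite F \<and> card F = card V"

end

theory Submission
  imports Defs "HOL-Computational_Algebra.Factorial_Ring"
begin

text \<open>Every member of a maximal collection is supported at a single vertex: distinct members
  have disjoint supports and there are as many members as vertices. A class supported at \<open>p\<close>
  vanishes at the far end of each edge \<open>e\<close> at \<open>p\<close>, so it is divisible by the weight \<open>\<alpha> e\<close>.
  The weights are primitive linear forms, which are prime in \<open>\<int>[x\<^sub>1, \<dots>, x\<^sub>r]\<close>
  (Euclid's algorithm on the coefficients, realised by unimodular changes of variables,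
  turns such a form into \<open>\<plusminus>x\<^sub>k\<close>), and the weights at \<open>p\<close> are pairwise non-associated;
  hence the class is a multiple of \<open>\<tau>\<^sub>p(p)\<close>. If a maximal collection \<open>G\<close> divides all
  others, it divides the Thom classes while being a multiple of them, so the factors are
  units of \<open>\<int>[x]\<close>, namely \<open>\<plusminus>1\<close>.\<close>

section \<open>Substitution homomorphisms\<close>

declare One_nat_def [simp del]

abbreviation poly_var :: "nat \<Rightarrow> ipoly" where
  "poly_var l \<equiv> frag_of (Poly_Mapping.single l 1)"

definition monom_eval :: "(nat \<Rightarrow> ipoly) \<Rightarrow> (nat \<Rightarrow>\<^sub>0 nat) \<Rightarrow> ipoly" where
  "monom_eval \<sigma> m = (\<Prod>l\<in>Poly_Mapping.keys m. \<sigma> l ^ Poly_Mapping.lookup m l)"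

definition poly_subst :: "(nat \<Rightarrow> ipoly) \<Rightarrow> ipoly \<Rightarrow> ipoly" where
  "poly_subst \<sigma> = frag_extend (monom_eval \<sigma>)"

lemma monom_eval_superset:
  assumes "finite S" "Poly_Mapping.keys m \<subseteq> S"
  shows "monom_eval \<sigma> m = (\<Prod>l\<in>S. \<sigma> l ^ Poly_Mapping.lookup m l)"
  unfolding monom_eval_def
  by (rule prod.mono_neutral_cong_left) (use assms in \<open>auto simp: in_keys_iff\<close>)

lemma monom_eval_add: "monom_eval \<sigma> (m + m') = monom_eval \<sigma> m * monom_eval \<sigma> m'"
proof -
  let ?S = "Poly_Mapping.keys m \<union> Poly_Mapping.keys m'"
  have fin: "finite ?S" by simp
  have "monom_eval \<sigma> (m + m') = (\<Prod>l\<in>?S. \<sigma> l ^ Poly_Mapping.lookup (m + m') l)"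
    by (rule monom_eval_superset[OF fin]) (use keys_add[of m m'] in auto)
  also have "\<dots> = (\<Prod>l\<in>?S. \<sigma> l ^ Poly_Mapping.lookup m l * \<sigma> l ^ Poly_Mapping.lookup m' l)"
    by (simp add: lookup_add power_add)
  also have "\<dots> = monom_eval \<sigma> m * monom_eval \<sigma> m'"
    by (simp add: prod.distrib monom_eval_superset[OF fin])
  finally show ?thesis .
qed

lemma monom_eval_zero [simp]: "monom_eval \<sigma> 0 = 1"
  by (simp add: monom_eval_def)

lemma monom_eval_var [simp]: "monom_eval \<sigma> (Poly_Mapping.single l 1) = \<sigma> l"
  by (simp add: monom_eval_def)

lemma poly_subst_frag_of [simp]: "poly_subst \<sigma> (frag_of m) = monom_eval \<sigma> m"
  by (simp add: poly_subst_def)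

lemma poly_subst_zero [simp]: "poly_subst \<sigma> 0 = 0"
  by (simp add: poly_subst_def)

lemma poly_subst_add: "poly_subst \<sigma> (a + b) = poly_subst \<sigma> a + poly_subst \<sigma> b"
  by (simp add: poly_subst_def frag_extend_add)

lemma poly_subst_diff: "poly_subst \<sigma> (a - b) = poly_subst \<sigma> a - poly_subst \<sigma> b"
  by (simp add: poly_subst_def frag_extend_diff)

lemma poly_subst_cmul: "poly_subst \<sigma> (frag_cmul c a) = frag_cmul c (poly_subst \<sigma> a)"
  by (simp add: poly_subst_def frag_extend_cmul)

lemma poly_subst_mult: "poly_subst \<sigma> (p * q) = poly_subst \<sigma> p * poly_subst \<sigma> q"
proof -
  have monom: "poly_subst \<sigma> (frag_of m * q) = monom_eval \<sigma> m * poly_subst \<sigma> q" for m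
  proof -
    have "Poly_Mapping.keys q \<subseteq> UNIV" by simp
    then show ?thesis
      by (induction q rule: frag_induction)
        (simp_all add: mult_single monom_eval_add right_diff_distrib poly_subst_diff)
  qed
  have "Poly_Mapping.keys p \<subseteq> UNIV" by simp
  then show ?thesis
    by (induction p rule: frag_induction) (simp_all add: monom left_diff_distrib poly_subst_diff)
qed

lemma poly_subst_one [simp]: "poly_subst \<sigma> 1 = 1"
  by (metis monom_eval_zero single_one poly_subst_frag_of)

lemma poly_subst_power: "poly_subst \<sigma> (p ^ k) = poly_subst \<sigma> p ^ k"
  by (induction k) (simp_all add: poly_subst_mult)

lemma poly_subst_prod: "poly_subst \<sigma> (\<Prod>l\<in>S. f l) = (\<Prod>l\<in>S. poly_subst \<sigma> (f l))"
  by (induction S rule: infinite_finite_induct) (simp_all add: poly_subst_mult)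

lemma poly_subst_poly_subst:
  "poly_subst \<tau> (poly_subst \<sigma> p) = poly_subst (\<lambda>l. poly_subst \<tau> (\<sigma> l)) p"
proof -
  have "Poly_Mapping.keys p \<subseteq> UNIV" by simp
  then show ?thesis
    by (induction p rule: frag_induction)
      (simp_all add: monom_eval_def poly_subst_prod poly_subst_power poly_subst_diff)
qed

lemma poly_var_power: "poly_var l ^ k = frag_of (Poly_Mapping.single l k)"
proof (induction k)
  case (Suc k)
  have "Poly_Mapping.single l (Suc k) = Poly_Mapping.single l 1 + Poly_Mapping.single l k"
    by (simp add: single_add[symmetric] One_nat_def)
  then show ?case using Suc by (simp add: mult_single)
qed simp

lemma monom_eval_poly_var: "monom_eval poly_var m = frag_of m"
proof -
  have prod_frag_of: "(\<Prod>l\<in>S. frag_of (g l)) = frag_of (\<Sum>l\<in>S. g l)" for S and g :: "nat \<Rightarrow> nat \<Rightarrow>\<^sub>0 nat"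
    by (induction S rule: infinite_finite_induct) (simp_all add: mult_single)
  have "(\<Sum>l\<in>Poly_Mapping.keys m. Poly_Mapping.single l (Poly_Mapping.lookup m l)) = m"
    by (rule poly_mapping_eqI)
      (simp add: lookup_sum lookup_single when_def in_keys_iff sum.delta' split: if_splits)
  then show ?thesis
    by (simp only: monom_eval_def poly_var_power prod_frag_of)
qed

lemma poly_subst_poly_var_id: "poly_subst poly_var p = p"
  by (metis frag_expansion frag_extend_eq monom_eval_poly_var poly_subst_def)

section \<open>Leading terms and units\<close>

lemma lookup_mult_keys:
  "Poly_Mapping.lookup ((f::ipoly) * g) k =
    (\<Sum>a\<in>Poly_Mapping.keys f. \<Sum>b\<in>Poly_Mapping.keys g.
        if a + b = k then Poly_Mapping.lookup f a * Poly_Mapping.lookup g b else 0)"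
proof -
  have expand: "p = (\<Sum>a\<in>Poly_Mapping.keys p. Poly_Mapping.single a (Poly_Mapping.lookup p a))"
    for p :: ipoly
    by (rule poly_mapping_eqI)
      (simp add: lookup_sum lookup_single when_def in_keys_iff sum.delta' split: if_splits)
  have "f * g = (\<Sum>a\<in>Poly_Mapping.keys f. \<Sum>b\<in>Poly_Mapping.keys g.
      Poly_Mapping.single (a + b) (Poly_Mapping.lookup f a * Poly_Mapping.lookup g b))"
    by (subst expand[of f], subst expand[of g])
      (simp add: sum_distrib_left sum_distrib_right mult_single, subst sum.swap, rule refl)
  then show ?thesis
    by (simp add: lookup_sum lookup_single when_def)
qed

text \<open>The lexicographic order on exponent vectors is a monomial order, so the product of
  the leading terms cannot cancel.\<close>
lemma lookup_mult_Max_keys: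
  assumes "(f::ipoly) \<noteq> 0" "g \<noteq> 0"
  shows "Poly_Mapping.lookup (f * g) (Max (Poly_Mapping.keys f) + Max (Poly_Mapping.keys g)) =
           Poly_Mapping.lookup f (Max (Poly_Mapping.keys f)) * Poly_Mapping.lookup g (Max (Poly_Mapping.keys g))"
proof -
  define Mf where "Mf = Max (Poly_Mapping.keys f)"
  define Mg where "Mg = Max (Poly_Mapping.keys g)"
  have kf: "Mf \<in> Poly_Mapping.keys f" and kg: "Mg \<in> Poly_Mapping.keys g"
    using assms by (simp_all add: Mf_def Mg_def)
  have only_max: "a = Mf \<and> b = Mg"
    if "a \<in> Poly_Mapping.keys f" "b \<in> Poly_Mapping.keys g" "a + b = Mf + Mg" for a b
  proof -
    have "a \<le> Mf" "b \<le> Mg" using that by (simp_all add: Mf_def Mg_def)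
    moreover have "\<not> a < Mf" using \<open>b \<le> Mg\<close> that(3) add_less_le_mono by fastforce
    moreover have "\<not> b < Mg" using \<open>a \<le> Mf\<close> that(3) add_le_less_mono by fastforce
    ultimately show ?thesis by auto
  qed
  have "Poly_Mapping.lookup (f * g) (Mf + Mg) =
    (\<Sum>a\<in>Poly_Mapping.keys f. \<Sum>b\<in>Poly_Mapping.keys g.
        if a = Mf \<and> b = Mg then Poly_Mapping.lookup f a * Poly_Mapping.lookup g b else 0)"
    unfolding lookup_mult_keys
    by (rule sum.cong[OF refl], rule sum.cong[OF refl]) (use only_max in auto)
  also have "\<dots> = (\<Sum>a\<in>Poly_Mapping.keys f. if a = Mf then Poly_Mapping.lookup f a * Poly_Mapping.lookup g Mg else 0)"
    by (rule sum.cong[OF refl]) (use kg in \<open>simp add: if_distrib sum.delta' cong: if_cong\<close>)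
  also have "\<dots> = Poly_Mapping.lookup f Mf * Poly_Mapping.lookup g Mg"
    using kf by (simp add: sum.delta')
  finally show ?thesis by (simp add: Mf_def Mg_def)
qed

lemma Max_keys_mult_in_keys:
  assumes "(f::ipoly) \<noteq> 0" "g \<noteq> 0"
  shows "Max (Poly_Mapping.keys f) + Max (Poly_Mapping.keys g) \<in> Poly_Mapping.keys (f * g)"
proof -
  have "Max (Poly_Mapping.keys h) \<in> Poly_Mapping.keys h" if "h \<noteq> 0" for h :: ipoly
    using that by simp
  then show ?thesis
    using lookup_mult_Max_keys[OF assms] assms by (simp add: in_keys_iff)
qed

lemma Max_keys_eq_0_imp_const:
  assumes "(a::ipoly) \<noteq> 0" "Max (Poly_Mapping.keys a) = 0"
  shows "a = of_int (Poly_Mapping.lookup a 0)"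
proof -
  have "k = 0" if "k \<in> Poly_Mapping.keys a" for k
  proof -
    have "k \<le> 0" using that assms(2) Max_ge[of "Poly_Mapping.keys a" k] by simp
    moreover have "\<not> k < 0"
      by transfer (simp add: less_fun_def)
    ultimately show "k = 0" by simp
  qed
  then have "a = Poly_Mapping.single 0 (Poly_Mapping.lookup a 0)"
    by (intro poly_mapping_eqI) (auto simp: lookup_single when_def in_keys_iff)
  then show ?thesis
    by (metis single_of_int of_int_eq_id id_apply)
qed

lemma ipoly_unit_cases:
  assumes "(a::ipoly) * b = 1"
  shows "a = 1 \<or> a = -1"
proof -
  have nz: "a \<noteq> 0" "b \<noteq> 0" using assms by auto
  have "Max (Poly_Mapping.keys a) + Max (Poly_Mapping.keys b) = 0"
    using Max_keys_mult_in_keys[OF nz] assms by simp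
  then have "Max (Poly_Mapping.keys a) = 0" "Max (Poly_Mapping.keys b) = 0"
    by (metis add_is_0 lookup_add lookup_zero poly_mapping_eqI)+
  then have "a = of_int (Poly_Mapping.lookup a 0)" "b = of_int (Poly_Mapping.lookup b 0)"
    using Max_keys_eq_0_imp_const nz by blast+
  then have "of_int (Poly_Mapping.lookup a 0 * Poly_Mapping.lookup b 0) = (1::ipoly)"
    using assms by (metis of_int_mult)
  then have "Poly_Mapping.lookup a 0 * Poly_Mapping.lookup b 0 = 1"
    by (metis of_int_eq_1_iff)
  then show ?thesis
    using \<open>a = of_int (Poly_Mapping.lookup a 0)\<close> zmult_eq_1_iff by force
qed

definition kill_var :: "nat \<Rightarrow> nat \<Rightarrow> ipoly" where
  "kill_var k = (\<lambda>l. if l = k then 0 else poly_var l)"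

lemma poly_var_dvd_iff_kill_var: "poly_var k dvd f \<longleftrightarrow> poly_subst (kill_var k) f = 0"
proof
  assume "poly_var k dvd f"
  then show "poly_subst (kill_var k) f = 0"
    by (auto simp: poly_subst_mult kill_var_def)
next
  assume killed: "poly_subst (kill_var k) f = 0"
  obtain d e where d: "Poly_Mapping.keys d \<subseteq> {m. Poly_Mapping.lookup m k = 0}"
    and e: "Poly_Mapping.keys e \<subseteq> {m. Poly_Mapping.lookup m k \<noteq> 0}" and "d + e = f"
    using frag_split[of f "{m. Poly_Mapping.lookup m k = 0}" "{m. Poly_Mapping.lookup m k \<noteq> 0}"]
    by blast
  have "monom_eval (kill_var k) m = frag_of m" if "Poly_Mapping.lookup m k = 0" for m
  proof -
    have "monom_eval (kill_var k) m = monom_eval poly_var m"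
      unfolding monom_eval_def
      by (rule prod.cong) (use that in \<open>auto simp: kill_var_def in_keys_iff\<close>)
    then show ?thesis by (simp add: monom_eval_poly_var)
  qed
  with d have d_fixed: "poly_subst (kill_var k) d = d"
    by (induction d rule: frag_induction) (simp_all add: poly_subst_diff)
  have "monom_eval (kill_var k) m = 0" if "Poly_Mapping.lookup m k \<noteq> 0" for m
    using that unfolding monom_eval_def
    by (auto simp: kill_var_def in_keys_iff prod_zero_iff intro!: bexI[of _ k])
  with e have e_killed: "poly_subst (kill_var k) e = 0"
    by (induction e rule: frag_induction) (simp_all add: poly_subst_diff)
  have "poly_var k dvd frag_of m" if "Poly_Mapping.lookup m k \<noteq> 0" for m
  proof -
    have "m = Poly_Mapping.single k 1 + (m - Poly_Mapping.single k 1)"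
      by (rule poly_mapping_eqI)
        (use that in \<open>auto simp: lookup_add lookup_minus lookup_single when_def\<close>)
    then show ?thesis by (metis dvd_triv_left mult_single mult_1)
  qed
  with e have "poly_var k dvd e"
    by (induction e rule: frag_induction) (simp_all add: dvd_diff)
  moreover have "d = 0"
    using poly_subst_add[of "kill_var k" d e] killed d_fixed e_killed \<open>d + e = f\<close> by simp
  ultimately show "poly_var k dvd f"
    using \<open>d + e = f\<close> by simp
qed

lemma prime_elem_poly_var: "prime_elem (poly_var k)"
proof (rule prime_elemI)
  show "\<not> poly_var k dvd 1"
    by (simp add: poly_var_dvd_iff_kill_var)
  show "poly_var k dvd a \<or> poly_var k dvd b" if "poly_var k dvd a * b" for a b
    using that by (simp add: poly_var_dvd_iff_kill_var poly_subst_mult)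
qed simp

definition restrict_vars :: "nat \<Rightarrow> nat \<Rightarrow> ipoly" where
  "restrict_vars r = (\<lambda>l. if l < r then poly_var l else 0)"

lemma monom_eval_restrict_vars:
  "monom_eval (restrict_vars r) m = (if Poly_Mapping.keys m \<subseteq> {..<r} then frag_of m else 0)"
proof (cases "Poly_Mapping.keys m \<subseteq> {..<r}")
  case True
  have "monom_eval (restrict_vars r) m = monom_eval poly_var m"
    unfolding monom_eval_def by (rule prod.cong) (use True in \<open>auto simp: restrict_vars_def\<close>)
  then show ?thesis using True by (simp add: monom_eval_poly_var)
next
  case False
  then obtain l where "l \<in> Poly_Mapping.keys m" "\<not> l < r" by auto
  then show ?thesis using False unfolding monom_eval_def
    by (auto simp: restrict_vars_def prod_zero_iff in_keys_iff intro!: bexI[of _ l])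
qed

lemma restrict_vars_in_HBT: "poly_subst (restrict_vars r) p \<in> HBT r"
proof -
  have "Poly_Mapping.keys (poly_subst (restrict_vars r) p) \<subseteq> {m. Poly_Mapping.keys m \<subseteq> {..<r}}"
    unfolding poly_subst_def
    by (rule order_trans[OF keys_frag_extend]) (auto simp: monom_eval_restrict_vars keys_frag_of split: if_splits)
  then show ?thesis by (auto simp: HBT_def)
qed

lemma HBT_iff_restrict_vars: "p \<in> HBT r \<longleftrightarrow> poly_subst (restrict_vars r) p = p"
proof
  assume "p \<in> HBT r"
  then have "Poly_Mapping.keys p \<subseteq> {m. Poly_Mapping.keys m \<subseteq> {..<r}}" by (auto simp: HBT_def)
  then show "poly_subst (restrict_vars r) p = p"
    by (induction p rule: frag_induction) (simp_all add: monom_eval_restrict_vars poly_subst_diff)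
qed (metis restrict_vars_in_HBT)

lemma HBT_prod: "(\<And>x. x \<in> S \<Longrightarrow> f x \<in> HBT r) \<Longrightarrow> (\<Prod>x\<in>S. f x) \<in> HBT r"
  by (simp add: HBT_iff_restrict_vars poly_subst_prod)

lemma HBT_cofactor:
  assumes "f \<in> HBT r" "t \<in> HBT r" "f = c * t"
  shows "\<exists>c'\<in>HBT r. f = c' * t"
  using assms restrict_vars_in_HBT by (metis HBT_iff_restrict_vars poly_subst_mult)

section \<open>Primitive linear forms are prime\<close>

definition linear_form :: "ipoly \<Rightarrow> bool" where
  "linear_form a \<longleftrightarrow> (\<forall>m\<in>Poly_Mapping.keys a. \<exists>j. m = Poly_Mapping.single j 1)"

definition coeffs_coprime :: "ipoly \<Rightarrow> bool" where
  "coeffs_coprime a \<longleftrightarrow> (\<forall>d::int. (\<forall>m. d dvd Poly_Mapping.lookup a m) \<longrightarrow> is_unit d)"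

definition coeff_norm :: "ipoly \<Rightarrow> nat" where
  "coeff_norm a = (\<Sum>m\<in>Poly_Mapping.keys a. nat \<bar>Poly_Mapping.lookup a m\<bar>)"

definition shear :: "nat \<Rightarrow> nat \<Rightarrow> int \<Rightarrow> nat \<Rightarrow> ipoly" where
  "shear i j q = (\<lambda>l. if l = i then poly_var i + frag_cmul q (poly_var j) else poly_var l)"

lemma single_one_eq_iff [simp]:
  "Poly_Mapping.single l (1::nat) = Poly_Mapping.single k 1 \<longleftrightarrow> l = k"
  by (metis lookup_single_eq lookup_single_not_eq zero_neq_one)

lemma HBT2_linear_form: "a \<in> HBT2 r \<Longrightarrow> linear_form a"
  unfolding linear_form_def
proof
  fix m assume "a \<in> HBT2 r" "m \<in> Poly_Mapping.keys a"
  then have deg: "(\<Sum>j\<in>Poly_Mapping.keys m. Poly_Mapping.lookup m j) = 1"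
    by (auto simp: HBT2_def)
  then obtain j where j: "j \<in> Poly_Mapping.keys m" by fastforce
  have split: "Poly_Mapping.lookup m j + (\<Sum>l\<in>Poly_Mapping.keys m - {j}. Poly_Mapping.lookup m l) = 1"
    using deg sum.remove[OF finite_keys j, of "Poly_Mapping.lookup m"] by simp
  have pos: "Poly_Mapping.lookup m l \<ge> 1" if "l \<in> Poly_Mapping.keys m" for l
    using that by (simp add: in_keys_iff)
  have keys: "Poly_Mapping.keys m = {j}"
  proof (rule ccontr)
    assume "Poly_Mapping.keys m \<noteq> {j}"
    then obtain l where l: "l \<in> Poly_Mapping.keys m - {j}" using j by blast
    then have "Poly_Mapping.lookup m l \<le> (\<Sum>l\<in>Poly_Mapping.keys m - {j}. Poly_Mapping.lookup m l)"
      by (intro member_le_sum) auto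
    moreover have "Poly_Mapping.lookup m l \<ge> 1" using l pos by blast
    ultimately show False using split pos[OF j] by linarith
  qed
  then have "Poly_Mapping.lookup m j = 1" using split by simp
  with keys have "m = Poly_Mapping.single j 1"
    by (intro poly_mapping_eqI) (auto simp: lookup_single when_def in_keys_iff)
  then show "\<exists>j. m = Poly_Mapping.single j 1" by blast
qed

lemma coeff_gcd_one_imp_coeffs_coprime: "coeff_gcd_one a \<Longrightarrow> coeffs_coprime a"
  unfolding coeffs_coprime_def coeff_gcd_one_def
  by (metis (mono_tags, lifting) Gcd_greatest imageE)

lemma coeffs_coprime_nonzero: "coeffs_coprime a \<Longrightarrow> a \<noteq> 0"
  unfolding coeffs_coprime_def by (metis dvd_refl lookup_zero not_is_unit_0)

lemma poly_subst_shear_inverse: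
  assumes "i \<noteq> j"
  shows "poly_subst (shear i j (-q)) (poly_subst (shear i j q) p) = p"
proof -
  have "poly_subst (shear i j (-q)) (shear i j q l) = poly_var l" for l
  proof -
    have "frag_cmul (-q) (poly_var j) + frag_cmul q (poly_var j) = 0"
      by (simp add: frag_cmul_distrib[symmetric])
    then show ?thesis
      using assms by (simp add: shear_def poly_subst_add poly_subst_cmul add.assoc)
  qed
  then show ?thesis by (simp add: poly_subst_poly_subst poly_subst_poly_var_id)
qed

lemma poly_subst_shear_linear_form:
  assumes "linear_form a"
  shows "poly_subst (shear i j q) a =
           a + frag_cmul (q * Poly_Mapping.lookup a (Poly_Mapping.single i 1)) (poly_var j)"
proof -
  let ?g = "\<lambda>m. frag_of m + (if m = Poly_Mapping.single i 1 then frag_cmul q (poly_var j) else 0)"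
  have "poly_subst (shear i j q) a = frag_extend ?g a"
    unfolding poly_subst_def
  proof (rule frag_extend_eq)
    fix m assume "m \<in> Poly_Mapping.keys a"
    then obtain l where "m = Poly_Mapping.single l 1" using assms by (auto simp: linear_form_def)
    then show "monom_eval (shear i j q) m = ?g m" by (auto simp: shear_def)
  qed
  also have "\<dots> = frag_extend frag_of a
      + frag_extend (\<lambda>m. if m = Poly_Mapping.single i 1 then frag_cmul q (poly_var j) else 0) a"
    by (simp add: frag_extend_def sum.distrib frag_cmul_distrib2)
  also have "frag_extend (\<lambda>m. if m = Poly_Mapping.single i 1 then frag_cmul q (poly_var j) else 0) a
      = frag_cmul (Poly_Mapping.lookup a (Poly_Mapping.single i 1)) (frag_cmul q (poly_var j))"
    unfolding frag_extend_def by (simp add: if_distrib sum.delta' in_keys_iff cong: if_cong)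
  finally show ?thesis by (simp add: frag_expansion[symmetric] mult.commute)
qed

lemma prime_elem_if_prime_elem_poly_subst:
  assumes inv: "\<And>p. poly_subst \<tau> (poly_subst \<sigma> p) = p"
    and prime: "prime_elem (poly_subst \<sigma> a)"
  shows "prime_elem a"
proof (rule prime_elemI)
  have dvd_reflect: "a dvd f" if dvd: "poly_subst \<sigma> a dvd poly_subst \<sigma> f" for f
  proof -
    obtain k where "poly_subst \<sigma> f = poly_subst \<sigma> a * k" using dvd by (auto simp: dvd_def)
    then have "f = a * poly_subst \<tau> k" by (metis inv poly_subst_mult)
    then show ?thesis by simp
  qed
  show "a \<noteq> 0" using prime by auto
  have dvd_transfer: "poly_subst \<sigma> a dvd poly_subst \<sigma> f" if "a dvd f" for f
    using that by (auto simp: dvd_def poly_subst_mult)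
  show "\<not> a dvd 1"
    using dvd_transfer[of 1] prime prime_elem_not_unit by auto
  show "a dvd f \<or> a dvd g" if "a dvd f * g" for f g
    using dvd_transfer[OF that] prime dvd_reflect by (auto simp: poly_subst_mult prime_elem_dvd_mult_iff)
qed

lemma prime_elem_minus_iff [simp]: "prime_elem (- p) \<longleftrightarrow> prime_elem (p :: 'a :: comm_ring_1)"
  by (simp add: prime_elem_def)

lemma prime_elem_linear_form_single:
  assumes lin: "linear_form a" and coprime: "coeffs_coprime a"
    and card: "card (Poly_Mapping.keys a) = 1"
  shows "prime_elem a"
proof -
  obtain m where keys: "Poly_Mapping.keys a = {m}" using card by (rule card_1_singletonE)
  then obtain k where m: "m = Poly_Mapping.single k 1" using lin by (auto simp: linear_form_def)
  define c where "c = Poly_Mapping.lookup a m"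
  have a: "a = Poly_Mapping.single m c"
    by (rule poly_mapping_eqI) (use keys in \<open>auto simp: c_def lookup_single when_def in_keys_iff\<close>)
  then have "is_unit c"
    using coprime by (auto simp: coeffs_coprime_def lookup_single when_def)
  then have "c = 1 \<or> c = -1" by auto
  then have "a = poly_var k \<or> a = - poly_var k"
    using a m by (auto simp: single_uminus)
  then show ?thesis
    using prime_elem_poly_var by auto
qed

lemma coeffs_coprime_add_multiple:
  assumes "coeffs_coprime a" "si \<noteq> sj"
  shows "coeffs_coprime (a + frag_cmul (q * Poly_Mapping.lookup a si) (frag_of sj))"
  unfolding coeffs_coprime_def
proof (intro allI impI)
  let ?a' = "a + frag_cmul (q * Poly_Mapping.lookup a si) (frag_of sj)"
  fix d :: int assume d: "\<forall>m. d dvd Poly_Mapping.lookup ?a' m"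
  have lookup_a': "Poly_Mapping.lookup ?a' m =
      Poly_Mapping.lookup a m + (if m = sj then q * Poly_Mapping.lookup a si else 0)" for m
    by (simp add: lookup_add)
  have "d dvd Poly_Mapping.lookup a si"
    using d[rule_format, of si] assms(2) by (simp add: lookup_a')
  then have "d dvd Poly_Mapping.lookup a m" for m
    using d[rule_format, of m] by (auto simp: lookup_a' dvd_add_left_iff split: if_splits)
  then show "is_unit d" using assms(1) by (auto simp: coeffs_coprime_def)
qed

lemma coeff_norm_less:
  assumes same: "\<And>m. m \<noteq> s \<Longrightarrow> Poly_Mapping.lookup b m = Poly_Mapping.lookup a m"
    and less: "\<bar>Poly_Mapping.lookup b s\<bar> < \<bar>Poly_Mapping.lookup a s\<bar>"
  shows "coeff_norm b < coeff_norm a"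
proof -
  have s: "s \<in> Poly_Mapping.keys a" using less by (auto simp: in_keys_iff)
  have "Poly_Mapping.keys b \<subseteq> Poly_Mapping.keys a"
    using same s by (metis in_keys_iff subsetI)
  then have "coeff_norm b = (\<Sum>m\<in>Poly_Mapping.keys a. nat \<bar>Poly_Mapping.lookup b m\<bar>)"
    unfolding coeff_norm_def by (intro sum.mono_neutral_left) (auto simp: in_keys_iff)
  also have "\<dots> = nat \<bar>Poly_Mapping.lookup b s\<bar>
      + (\<Sum>m\<in>Poly_Mapping.keys a - {s}. nat \<bar>Poly_Mapping.lookup a m\<bar>)"
    using sum.remove[OF finite_keys s, of "\<lambda>m. nat \<bar>Poly_Mapping.lookup b m\<bar>"] same by simp
  also have "\<dots> < nat \<bar>Poly_Mapping.lookup a s\<bar>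
      + (\<Sum>m\<in>Poly_Mapping.keys a - {s}. nat \<bar>Poly_Mapping.lookup a m\<bar>)"
    using less by simp
  also have "\<dots> = coeff_norm a"
    unfolding coeff_norm_def
    using sum.remove[OF finite_keys s, of "\<lambda>m. nat \<bar>Poly_Mapping.lookup a m\<bar>"] by simp
  finally show ?thesis .
qed

lemma linear_form_two_vars:
  assumes lin: "linear_form a" and card: "card (Poly_Mapping.keys a) \<ge> 2"
  obtains i j where "i \<noteq> j"
    "Poly_Mapping.single i 1 \<in> Poly_Mapping.keys a" "Poly_Mapping.single j 1 \<in> Poly_Mapping.keys a"
    "\<bar>Poly_Mapping.lookup a (Poly_Mapping.single i 1)\<bar> \<le> \<bar>Poly_Mapping.lookup a (Poly_Mapping.single j 1)\<bar>"
proof -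
  obtain m1 m2 where m12: "m1 \<in> Poly_Mapping.keys a" "m2 \<in> Poly_Mapping.keys a" "m1 \<noteq> m2"
    using card card_le_Suc0_iff_eq[OF finite_keys, of a] by (auto simp: One_nat_def)
  then obtain i1 j1 where m1: "m1 = Poly_Mapping.single i1 1" and m2: "m2 = Poly_Mapping.single j1 1"
    using lin unfolding linear_form_def by blast
  show thesis
  proof (cases "\<bar>Poly_Mapping.lookup a m1\<bar> \<le> \<bar>Poly_Mapping.lookup a m2\<bar>")
    case True
    then show ?thesis using that[of i1 j1] m12 m1 m2 by auto
  next
    case False
    then show ?thesis using that[of j1 i1] m12 m1 m2 by auto
  qed
qed

text \<open>One step of Euclid's algorithm: adding \<open>\<plusminus>\<close> the smaller of two coefficients to the
  larger one lowers the norm.\<close>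
lemma linear_form_shear_reduces:
  assumes lin: "linear_form a" and coprime: "coeffs_coprime a"
    and card: "card (Poly_Mapping.keys a) \<ge> 2"
  obtains i j q where "i \<noteq> j" "linear_form (poly_subst (shear i j q) a)"
    "coeffs_coprime (poly_subst (shear i j q) a)"
    "coeff_norm (poly_subst (shear i j q) a) < coeff_norm a"
proof -
  obtain i j where ij: "i \<noteq> j"
    "Poly_Mapping.single i 1 \<in> Poly_Mapping.keys a" "Poly_Mapping.single j 1 \<in> Poly_Mapping.keys a"
    "\<bar>Poly_Mapping.lookup a (Poly_Mapping.single i 1)\<bar> \<le> \<bar>Poly_Mapping.lookup a (Poly_Mapping.single j 1)\<bar>"
    using linear_form_two_vars[OF lin card] by blast
  define ai where "ai = Poly_Mapping.lookup a (Poly_Mapping.single i 1)"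
  define aj where "aj = Poly_Mapping.lookup a (Poly_Mapping.single j 1)"
  define q :: int where "q = (if (ai > 0) = (aj > 0) then -1 else 1)"
  have "ai \<noteq> 0" "aj \<noteq> 0" using ij by (auto simp: ai_def aj_def in_keys_iff)
  then have q: "\<bar>aj + q * ai\<bar> < \<bar>aj\<bar>"
    using ij(4) unfolding q_def ai_def[symmetric] aj_def[symmetric] by (auto simp: abs_if)
  define a' where "a' = poly_subst (shear i j q) a"
  have a': "a' = a + frag_cmul (q * ai) (poly_var j)"
    by (simp add: a'_def ai_def poly_subst_shear_linear_form[OF lin])
  show thesis
  proof (rule that[of i j q, folded a'_def])
    show "i \<noteq> j" by (fact ij(1))
    have "Poly_Mapping.keys a' \<subseteq> Poly_Mapping.keys a \<union> Poly_Mapping.keys (frag_cmul (q * ai) (poly_var j))"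
      unfolding a' by (rule keys_add)
    also have "\<dots> \<subseteq> Poly_Mapping.keys a"
      using keys_cmul[of "q * ai" "poly_var j"] ij(3) by (auto simp: keys_frag_of)
    finally show "linear_form a'" using lin by (auto simp: linear_form_def)
    show "coeffs_coprime a'"
      using coeffs_coprime_add_multiple[OF coprime] ij(1) by (simp add: a' ai_def)
    have lookup_a': "Poly_Mapping.lookup a' m = Poly_Mapping.lookup a m
        + (if m = Poly_Mapping.single j 1 then q * ai else 0)" for m
      by (simp add: a' lookup_add)
    show "coeff_norm a' < coeff_norm a"
      by (rule coeff_norm_less[of "Poly_Mapping.single j 1"]) (use q in \<open>simp_all add: lookup_a' aj_def\<close>)
  qed
qed

theorem prime_elem_linear_form:
  assumes "linear_form a" "coeffs_coprime a"
  shows "prime_elem a"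
  using assms
proof (induction "coeff_norm a" arbitrary: a rule: less_induct)
  case less
  consider "card (Poly_Mapping.keys a) = 0" | "card (Poly_Mapping.keys a) = 1"
    | "card (Poly_Mapping.keys a) \<ge> 2" by linarith
  then show ?case
  proof cases
    case 1
    then show ?thesis using coeffs_coprime_nonzero[OF less.prems(2)] by simp
  next
    case 2
    then show ?thesis using prime_elem_linear_form_single less.prems by blast
  next
    case 3
    then obtain i j q where "i \<noteq> j" and reduced: "linear_form (poly_subst (shear i j q) a)"
      "coeffs_coprime (poly_subst (shear i j q) a)"
      "coeff_norm (poly_subst (shear i j q) a) < coeff_norm a"
      using linear_form_shear_reduces less.prems by blast
    then have "prime_elem (poly_subst (shear i j q) a)"
      using less.hyps by blast
    then show ?thesis
      by (rule prime_elem_if_prime_elem_poly_subst[OF poly_subst_shear_inverse[OF \<open>i \<noteq> j\<close>]])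
  qed
qed

lemma linear_form_dvd_imp_int_multiple:
  assumes "linear_form a" "linear_form b" "a \<noteq> 0" "b \<noteq> 0" "a dvd b"
  shows "\<exists>c::int. b = of_int c * a"
proof -
  obtain h where h: "b = a * h" using assms(5) by (auto simp: dvd_def)
  have h0: "h \<noteq> 0" using h assms(4) by auto
  define Ma where "Ma = Max (Poly_Mapping.keys a)"
  define Mh where "Mh = Max (Poly_Mapping.keys h)"
  have "Ma \<in> Poly_Mapping.keys a" using assms(3) by (simp add: Ma_def)
  then obtain j where j: "Ma = Poly_Mapping.single j 1" using assms(1) by (auto simp: linear_form_def)
  have "Ma + Mh \<in> Poly_Mapping.keys b"
    using Max_keys_mult_in_keys[OF assms(3) h0] h by (simp add: Ma_def Mh_def)
  then obtain j' where j': "Ma + Mh = Poly_Mapping.single j' 1" using assms(2) by (auto simp: linear_form_def)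
  \<comment> \<open>the leading monomial of \<open>b\<close> has degree one, so that of the cofactor \<open>h\<close> has degree zero\<close>
  have "1 + Poly_Mapping.lookup Mh j = Poly_Mapping.lookup (Poly_Mapping.single j' 1) j"
    using j j' by (metis lookup_add lookup_single_eq)
  then have "j' = j" by (auto simp: lookup_single when_def split: if_splits)
  then have "Mh = 0" using j j' by (metis add_left_imp_eq add.right_neutral)
  then have "h = of_int (Poly_Mapping.lookup h 0)"
    using Max_keys_eq_0_imp_const[OF h0] by (simp add: Mh_def)
  then show ?thesis using h by (metis mult.commute)
qed

lemma prime_elem_dvd_prodE:
  fixes b :: "'b \<Rightarrow> 'a :: comm_semiring_1"
  assumes "prime_elem p" "finite S" "p dvd (\<Prod>e\<in>S. b e)"
  obtains e where "e \<in> S" "p dvd b e"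
  using assms(2,3) that
proof (induction S rule: finite_induct)
  case empty
  then show ?case using assms(1) prime_elem_not_unit by auto
next
  case (insert x F)
  then show ?case using assms(1) prime_elem_dvd_mult_iff by (metis insertCI prod.insert)
qed

lemma prod_prime_elems_dvd:
  fixes b :: "'b \<Rightarrow> 'a :: comm_semiring_1"
  assumes "finite S"
    and "\<And>e. e \<in> S \<Longrightarrow> prime_elem (b e)"
    and "\<And>e e'. e \<in> S \<Longrightarrow> e' \<in> S \<Longrightarrow> e \<noteq> e' \<Longrightarrow> \<not> b e dvd b e'"
    and "\<And>e. e \<in> S \<Longrightarrow> b e dvd x"
  shows "(\<Prod>e\<in>S. b e) dvd x"
  using assms
proof (induction S rule: finite_induct)
  case (insert e F)
  then obtain y where y: "x = (\<Prod>e\<in>F. b e) * y" by (auto simp: dvd_def)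
  have prime: "prime_elem (b e)" using insert.prems by simp
  have "\<not> b e dvd (\<Prod>e\<in>F. b e)"
  proof
    assume "b e dvd (\<Prod>e\<in>F. b e)"
    with prime insert.hyps(1) obtain e' where "e' \<in> F" "b e dvd b e'"
      by (rule prime_elem_dvd_prodE)
    then show False using insert.hyps(2) insert.prems(2)[of e e'] by auto
  qed
  then have "b e dvd y"
    using insert.prems(3)[of e] y prime prime_elem_dvd_mult_iff by auto
  then obtain z where "y = b e * z" by (auto simp: dvd_def)
  then have "x = (\<Prod>e\<in>insert e F. b e) * z" using y insert.hyps by (simp add: ac_simps)
  then show ?case by simp
qed simp

section \<open>Thom classes and maximal collections\<close>

lemma nvalent_graph_finite:
  assumes "nvalent_graph n V E i t rv"
  shows "finite V" "finite E"
  using assms by (simp_all add: nvalent_graph_def)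

lemma nvalent_graph_edge:
  assumes "nvalent_graph n V E i t rv" "e \<in> E"
  shows "i e \<in> V" "t e \<in> V" "i e \<noteq> t e" "rv e \<in> E" "i (rv e) = t e"
  using assms by (simp_all add: nvalent_graph_def)

lemma axial_function_prime_elem:
  assumes "axial_function r V E i rv \<alpha>" "e \<in> E"
  shows "prime_elem (\<alpha> e)"
  using assms HBT2_linear_form coeff_gcd_one_imp_coeffs_coprime prime_elem_linear_form
  by (auto simp: axial_function_def)

lemma axial_function_not_dvd:
  assumes axial: "axial_function r V E i rv \<alpha>"
    and "e \<in> E" "e' \<in> E" "e \<noteq> e'" "i e = i e'"
  shows "\<not> \<alpha> e dvd \<alpha> e'"
proof
  assume "\<alpha> e dvd \<alpha> e'"
  moreover have "linear_form (\<alpha> e)" "linear_form (\<alpha> e')" "\<alpha> e \<noteq> 0" "\<alpha> e' \<noteq> 0"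
    using assms HBT2_linear_form coeff_gcd_one_imp_coeffs_coprime coeffs_coprime_nonzero
    by (auto simp: axial_function_def)
  ultimately obtain c :: int where "\<alpha> e' = of_int c * \<alpha> e"
    using linear_form_dvd_imp_int_multiple by blast
  then have comb: "of_int c * \<alpha> e + of_int (-1) * \<alpha> e' = 0" by simp
  have "Z_lin_indep (\<alpha> e) (\<alpha> e')"
    using assms by (simp add: axial_function_def)
  then have "(-1::int) = 0"
    using comb unfolding Z_lin_indep_def by blast
  then show False by simp
qed

definition euler_class :: "'e set \<Rightarrow> ('e \<Rightarrow> 'v) \<Rightarrow> ('e \<Rightarrow> ipoly) \<Rightarrow> 'v \<Rightarrow> ipoly" where
  "euler_class E i \<alpha> p = (\<Prod>e\<in>out_edges E i p. \<alpha> e)"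

lemma thom_class_apply:
  "thom_class E i \<alpha> p q = (if q = p then euler_class E i \<alpha> p else 0)"
  by (simp add: thom_class_def euler_class_def)

lemma euler_class_nonzero:
  assumes "finite E" "axial_function r V E i rv \<alpha>"
  shows "euler_class E i \<alpha> p \<noteq> 0"
  using assms coeffs_coprime_nonzero coeff_gcd_one_imp_coeffs_coprime
  by (auto simp: euler_class_def out_edges_def axial_function_def)

lemma euler_class_in_HBT:
  assumes "axial_function r V E i rv \<alpha>"
  shows "euler_class E i \<alpha> p \<in> HBT r"
  using assms unfolding euler_class_def
  by (intro HBT_prod) (auto simp: axial_function_def out_edges_def HBT2_def)

lemma thom_class_in_graph_cohomology:
  assumes graph: "nvalent_graph n V E i t rv" and axial: "axial_function r V E i rv \<alpha>"
    and "p \<in> V"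
  shows "thom_class E i \<alpha> p \<in> graph_cohomology r V E i t \<alpha>"
proof -
  have fin: "finite (out_edges E i p)"
    using nvalent_graph_finite(2)[OF graph] by (simp add: out_edges_def)
  have "\<alpha> e dvd thom_class E i \<alpha> p (i e) - thom_class E i \<alpha> p (t e)" if e: "e \<in> E" for e
  proof -
    have "\<alpha> e dvd euler_class E i \<alpha> p" if "i e = p"
      using e that fin by (auto simp: euler_class_def out_edges_def intro: dvd_prodI)
    moreover have "\<alpha> e dvd euler_class E i \<alpha> p" if "t e = p"
    proof -
      have "rv e \<in> out_edges E i p"
        using nvalent_graph_edge[OF graph e] that by (simp add: out_edges_def)
      then have "\<alpha> (rv e) dvd euler_class E i \<alpha> p"
        unfolding euler_class_def using fin by (intro dvd_prodI)
      moreover have "\<alpha> e dvd \<alpha> (rv e)"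
        using axial e by (auto simp: axial_function_def)
      ultimately show ?thesis by (rule dvd_trans[rotated])
    qed
    ultimately show ?thesis
      using nvalent_graph_edge(3)[OF graph e] unfolding thom_class_apply
      by (cases "i e = p"; cases "t e = p") simp_all
  qed
  moreover have "thom_class E i \<alpha> p q \<in> HBT r" for q
    using euler_class_in_HBT[OF axial] by (simp add: thom_class_apply HBT_iff_restrict_vars)
  ultimately show ?thesis
    using \<open>p \<in> V\<close> by (auto simp: graph_cohomology_def thom_class_apply)
qed

lemma euler_class_dvd:
  assumes graph: "nvalent_graph n V E i t rv" and axial: "axial_function r V E i rv \<alpha>"
    and f: "f \<in> graph_cohomology r V E i t \<alpha>" and supp: "\<And>q. q \<noteq> p \<Longrightarrow> f q = 0"
  shows "euler_class E i \<alpha> p dvd f p"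
  unfolding euler_class_def
proof (rule prod_prime_elems_dvd)
  show "finite (out_edges E i p)"
    using nvalent_graph_finite(2)[OF graph] by (simp add: out_edges_def)
  show "prime_elem (\<alpha> e)" if "e \<in> out_edges E i p" for e
    using that axial_function_prime_elem[OF axial] by (simp add: out_edges_def)
  show "\<not> \<alpha> e dvd \<alpha> e'" if "e \<in> out_edges E i p" "e' \<in> out_edges E i p" "e \<noteq> e'" for e e'
    using that axial_function_not_dvd[OF axial] by (simp add: out_edges_def)
  show "\<alpha> e dvd f p" if "e \<in> out_edges E i p" for e
  proof -
    have e: "e \<in> E" "i e = p" using that by (auto simp: out_edges_def)
    then have "f (t e) = 0" using nvalent_graph_edge(3)[OF graph] supp by metis
    then show ?thesis using f e by (auto simp: graph_cohomology_def)
  qed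
qed

lemma thom_classes_maximal_collection:
  assumes graph: "nvalent_graph n V E i t rv" and axial: "axial_function r V E i rv \<alpha>"
  shows "maximal_collection r V E i t \<alpha> (thom_class E i \<alpha> ` V)"
proof -
  have euler: "euler_class E i \<alpha> p \<noteq> 0" for p
    using euler_class_nonzero[OF nvalent_graph_finite(2)[OF graph] axial] .
  have nonzero: "thom_class E i \<alpha> p \<noteq> (\<lambda>q. 0)" for p
    using euler[of p] by (metis thom_class_apply)
  show ?thesis
    unfolding maximal_collection_def
  proof (intro conjI)
    show "thom_class E i \<alpha> ` V \<subseteq> graph_cohomology r V E i t \<alpha> - {\<lambda>q. 0}"
      using thom_class_in_graph_cohomology[OF graph axial] nonzero by auto
    show "\<forall>f\<in>thom_class E i \<alpha> ` V. \<forall>g\<in>thom_class E i \<alpha> ` V. f \<noteq> g \<longrightarrow> (\<lambda>q. f q * g q) = (\<lambda>q. 0)"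
      by (auto simp: thom_class_apply fun_eq_iff)
    show "finite (thom_class E i \<alpha> ` V)"
      using nvalent_graph_finite(1)[OF graph] by simp
    have "inj_on (thom_class E i \<alpha>) V"
      using euler by (intro inj_onI) (metis thom_class_apply)
    then show "card (thom_class E i \<alpha> ` V) = card V" by (rule card_image)
  qed
qed

lemma maximal_collection_supported_at_vertices:
  assumes "finite V" and M: "maximal_collection r V E i t \<alpha> F"
  obtains \<phi> where "bij_betw \<phi> V F" "\<And>p q. p \<in> V \<Longrightarrow> q \<noteq> p \<Longrightarrow> \<phi> p q = 0"
proof -
  have nonzero: "\<exists>q. f q \<noteq> 0" if "f \<in> F" for f
    using that M by (fastforce simp: maximal_collection_def)
  have disjoint: "f q = 0 \<or> g q = 0" if "f \<in> F" "g \<in> F" "f \<noteq> g" for f g q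
    using that M fun_cong[of "\<lambda>q. f q * g q" "\<lambda>q. 0" q] by (auto simp: maximal_collection_def)
  have outside: "f q = 0" if "f \<in> F" "q \<notin> V" for f q
    using that M by (auto simp: maximal_collection_def graph_cohomology_def)
  define s where "s f = (SOME q. f q \<noteq> 0)" for f :: "'a \<Rightarrow> ipoly"
  have s: "f (s f) \<noteq> 0" if "f \<in> F" for f
    unfolding s_def using nonzero[OF that] by (rule someI_ex)
  have sV: "s f \<in> V" if "f \<in> F" for f
    using s[OF that] outside[OF that] by blast
  have inj: "inj_on s F"
    by (rule inj_onI) (metis disjoint s)
  have "s ` F = V"
    using M sV card_image[OF inj] \<open>finite V\<close>
    by (intro card_subset_eq) (auto simp: maximal_collection_def)
  then have bij: "bij_betw s F V" using inj by (simp add: bij_betw_def)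
  show thesis
  proof (rule that[of "inv_into F s"])
    show "bij_betw (inv_into F s) V F" using bij by (rule bij_betw_inv_into)
    fix p q assume "p \<in> V" "q \<noteq> p"
    then have "p \<in> s ` F" using \<open>s ` F = V\<close> by simp
    then obtain f where f: "f \<in> F" "s f = p" by (elim imageE) simp
    have "f q = 0"
    proof (rule ccontr)
      assume "f q \<noteq> 0"
      then have "q \<in> s ` F" using \<open>s ` F = V\<close> outside[OF f(1)] by blast
      then obtain g where g: "g \<in> F" "s g = q" by (elim imageE) simp
      then have "f \<noteq> g" using f \<open>q \<noteq> p\<close> by auto
      then show False using disjoint[OF f(1) g(1)] s[OF g(1)] g(2) \<open>f q \<noteq> 0\<close> by auto
    qed
    then show "inv_into F s p q = 0" using f inv_into_f_f[OF inj f(1)] by simp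
  qed
qed

lemma maximal_collection_eq_multiples_of_thom_classes:
  assumes graph: "nvalent_graph n V E i t rv" and axial: "axial_function r V E i rv \<alpha>"
    and M: "maximal_collection r V E i t \<alpha> F"
  shows "\<exists>c. (\<forall>p\<in>V. c p \<in> HBT r) \<and> F = (\<lambda>p. (\<lambda>q. c p * thom_class E i \<alpha> p q)) ` V"
proof -
  obtain \<phi> where bij: "bij_betw \<phi> V F" and supp: "\<And>p q. p \<in> V \<Longrightarrow> q \<noteq> p \<Longrightarrow> \<phi> p q = 0"
    using maximal_collection_supported_at_vertices[OF nvalent_graph_finite(1)[OF graph] M] by blast
  have "\<exists>c\<in>HBT r. \<phi> p = (\<lambda>q. c * thom_class E i \<alpha> p q)" if p: "p \<in> V" for p
  proof -
    have coh: "\<phi> p \<in> graph_cohomology r V E i t \<alpha>"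
      using bij p M by (auto simp: bij_betw_def maximal_collection_def)
    then obtain c0 where "\<phi> p p = c0 * euler_class E i \<alpha> p"
      using euler_class_dvd[OF graph axial coh supp[OF p]] by (auto simp: dvd_def mult.commute)
    moreover have "\<phi> p p \<in> HBT r" using coh p by (simp add: graph_cohomology_def)
    ultimately obtain c where "c \<in> HBT r" "\<phi> p p = c * euler_class E i \<alpha> p"
      using HBT_cofactor euler_class_in_HBT[OF axial] by blast
    then show ?thesis
      using supp[OF p] by (intro bexI[of _ c]) (auto simp: thom_class_apply fun_eq_iff)
  qed
  then obtain c where c: "\<And>p. p \<in> V \<Longrightarrow> c p \<in> HBT r \<and> \<phi> p = (\<lambda>q. c p * thom_class E i \<alpha> p q)"
    by metis
  have "F = \<phi> ` V" using bij by (simp add: bij_betw_def)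
  also have "\<dots> = (\<lambda>p. (\<lambda>q. c p * thom_class E i \<alpha> p q)) ` V" using c by simp
  finally show ?thesis using c by blast
qed

lemma universal_maximal_collection_eq_signed_thom_classes:
  assumes graph: "nvalent_graph n V E i t rv" and axial: "axial_function r V E i rv \<alpha>"
    and MG: "maximal_collection r V E i t \<alpha> G"
    and universal: "\<forall>F. maximal_collection r V E i t \<alpha> F \<longrightarrow>
           (\<exists>c. (\<forall>g\<in>G. c g \<in> HBT r) \<and> F = (\<lambda>g. (\<lambda>q. c g * g q)) ` G)"
  shows "\<exists>\<sigma>. bij_betw \<sigma> V G \<and>
           (\<forall>p\<in>V. \<sigma> p = thom_class E i \<alpha> p \<or> \<sigma> p = (\<lambda>q. - thom_class E i \<alpha> p q))"
proof -
  have euler: "euler_class E i \<alpha> p \<noteq> 0" for p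
    using euler_class_nonzero[OF nvalent_graph_finite(2)[OF graph] axial] .
  obtain d where G: "G = (\<lambda>p. (\<lambda>q. d p * thom_class E i \<alpha> p q)) ` V"
    using maximal_collection_eq_multiples_of_thom_classes[OF graph axial MG] by blast
  obtain c where thom: "thom_class E i \<alpha> ` V = (\<lambda>g. (\<lambda>q. c g * g q)) ` G"
    using universal thom_classes_maximal_collection[OF graph axial] by blast
  have sign: "d p = 1 \<or> d p = -1" if p: "p \<in> V" for p
  proof -
    have "thom_class E i \<alpha> p \<in> (\<lambda>g. (\<lambda>q. c g * g q)) ` G" using p thom by blast
    then obtain g where "g \<in> G" and thom_p: "thom_class E i \<alpha> p = (\<lambda>q. c g * g q)" by blast
    then obtain p' where g: "g = (\<lambda>q. d p' * thom_class E i \<alpha> p' q)" using G by blast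
    have at_p: "euler_class E i \<alpha> p = c g * (d p' * thom_class E i \<alpha> p' p)"
      using fun_cong[OF thom_p, of p] g by (simp add: thom_class_apply)
    then have "p' = p" using euler by (auto simp: thom_class_apply split: if_splits)
    then have "d p * c g = 1"
      using at_p euler[of p] by (simp add: thom_class_apply ac_simps)
    then show ?thesis by (rule ipoly_unit_cases)
  qed
  define \<sigma> where "\<sigma> p = (\<lambda>q. d p * thom_class E i \<alpha> p q)" for p
  have "inj_on \<sigma> V"
  proof (rule inj_onI)
    fix p p' assume "p \<in> V" "\<sigma> p = \<sigma> p'"
    then have "d p * euler_class E i \<alpha> p = d p' * thom_class E i \<alpha> p' p"
      unfolding \<sigma>_def by (metis thom_class_apply)
    then show "p = p'"
      using sign[OF \<open>p \<in> V\<close>] euler[of p] by (auto simp: thom_class_apply split: if_splits)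
  qed
  then have "bij_betw \<sigma> V G" using G by (simp add: bij_betw_def \<sigma>_def)
  moreover have "\<sigma> p = thom_class E i \<alpha> p \<or> \<sigma> p = (\<lambda>q. - thom_class E i \<alpha> p q)" if "p \<in> V" for p
    using sign[OF that] by (auto simp: \<sigma>_def)
  ultimately show ?thesis by blast
qed

theorem proposition3p3:
  fixes r n :: nat and V :: "'v set" and E :: "'e set"
    and i t :: "'e \<Rightarrow> 'v" and rv :: "'e \<Rightarrow> 'e" and \<alpha> :: "'e \<Rightarrow> ipoly"
  assumes "abstract_GKM_graph r n V E i t rv \<alpha>"
  shows "maximal_collection r V E i t \<alpha> (thom_class E i \<alpha> ` V)
    \<and> (\<forall>F. maximal_collection r V E i t \<alpha> F \<longrightarrow>
           (\<exists>c. (\<forall>p\<in>V. c p \<in> HBT r) \<and> F = (\<lambda>p. (\<lambda>q. c p * thom_class E i \<alpha> p q)) ` V))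
    \<and> (\<forall>G. maximal_collection r V E i t \<alpha> G \<longrightarrow>
           (\<forall>F. maximal_collection r V E i t \<alpha> F \<longrightarrow>
                (\<exists>c. (\<forall>g\<in>G. c g \<in> HBT r) \<and> F = (\<lambda>g. (\<lambda>q. c g * g q)) ` G)) \<longrightarrow>
           (\<exists>\<sigma>. bij_betw \<sigma> V G \<and>
                (\<forall>p\<in>V. \<sigma> p = thom_class E i \<alpha> p \<or> \<sigma> p = (\<lambda>q. - thom_class E i \<alpha> p q))))"
proof -
  have graph: "nvalent_graph n V E i t rv" and axial: "axial_function r V E i rv \<alpha>"
    using assms by (simp_all add: abstract_GKM_graph_def)
  show ?thesis
    using thom_classes_maximal_collection[OF graph axial]
      maximal_collection_eq_multiples_of_thom_classes[OF graph axial]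
      universal_maximal_collection_eq_signed_thom_classes[OF graph axial]
    by blast
qed

end
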